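(* Let $I\subseteq\mathbb{R}_+$ be a nonempty, non-singleton interval, let $n\in\mathbb{N}$, and let $\Phi: I\to\mathbb{R}_+$ be subadditive of order $n$. Then $\sqrt[n]{\Phi}$ is subadditive on $I$, i.e. $\sqrt[n]{\Phi(x+y)}\leq\sqrt[n]{\Phi(x)}+\sqrt[n]{\Phi(y)}$ for all $x,y\in I$ with $x+y\in I$.
   Context: $\mathbb{R}_+$ denotes the set of nonnegative real numbers. For $n\in\mathbb{N}$, a function $\Phi: I\to\mathbb{R}_+$ is called subadditive of order $n$ if for all $x,y\in I$ with $y>0$ and $x+y\in I$ one has $\Phi(x+y)\leq \Phi(x)+\frac{(x+y)^n-x^n}{y^n}\Phi(y)$. *)

theory Defs
  imports "HOL-Analysis.Analysis"
begin

definition subadditive_of_order :: "nat \<Rightarrow> real set \<Rightarrow> (real \<Rightarrow> real) \<Rightarrow> bool" where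
  "subadditive_of_order n I \<Phi> \<longleftrightarrow>
     (\<forall>x\<in>I. \<forall>y\<in>I. y > 0 \<longrightarrow> x + y \<in> I \<longrightarrow>
        \<Phi> (x + y) \<le> \<Phi> x + ((x + y) ^ n - x ^ n) / y ^ n * \<Phi> y)"

definition subadditive_on :: "real set \<Rightarrow> (real \<Rightarrow> real) \<Rightarrow> bool" where
  "subadditive_on I f \<longleftrightarrow> (\<forall>x\<in>I. \<forall>y\<in>I. x + y \<in> I \<longrightarrow> f (x + y) \<le> f x + f y)"

end

theory Submission
  imports Defs
begin

text \<open>Write \<open>a = \<Phi>(x)\<^sup>1\<^sup>/\<^sup>n\<close> and \<open>b = \<Phi>(y)\<^sup>1\<^sup>/\<^sup>n\<close>. The order-\<open>n\<close> inequality can be applied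
  with \<open>x\<close> and \<open>y\<close> in either role, so we may assume \<open>b/y \<le> a/x\<close>. With \<open>c = b/y\<close> the
  correction term becomes \<open>((x+y)\<^sup>n - x\<^sup>n) c\<^sup>n = (cx + b)\<^sup>n - (cx)\<^sup>n\<close>, and since
  \<open>t \<mapsto> (t + b)\<^sup>n - t\<^sup>n\<close> is nondecreasing for \<open>t \<ge> 0\<close> and \<open>cx \<le> a\<close>, it is at most
  \<open>(a + b)\<^sup>n - a\<^sup>n\<close>. Hence \<open>\<Phi>(x+y) \<le> (a + b)\<^sup>n\<close>.\<close>

lemma power_add_diff_mono:
  fixes u v d :: real
  assumes "0 \<le> u" "u \<le> v" "0 \<le> d"
  shows "(u + d) ^ n - u ^ n \<le> (v + d) ^ n - v ^ n"
proof -
  have "(u + d) ^ n - u ^ n = d * (\<Sum>i<n. u ^ (n - Suc i) * (u + d) ^ i)"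
    using power_diff_sumr2[of "u + d" n u] by simp
  also have "\<dots> \<le> d * (\<Sum>i<n. v ^ (n - Suc i) * (v + d) ^ i)"
    using assms by (intro mult_left_mono sum_mono mult_mono power_mono) auto
  also have "\<dots> = (v + d) ^ n - v ^ n"
    using power_diff_sumr2[of "v + d" n v] by simp
  finally show ?thesis .
qed

lemma power_add_ge_order_increment:
  fixes a b x y :: real
  assumes "0 \<le> a" "0 \<le> b" "0 < x" "0 < y" "b * x \<le> a * y"
  shows "a ^ n + ((x + y) ^ n - x ^ n) / y ^ n * b ^ n \<le> (a + b) ^ n"
proof -
  define c where "c = b / y"
  have "c \<ge> 0" "c * x \<le> a" "c * y = b"
    using assms by (simp_all add: c_def field_simps)
  have "((x + y) ^ n - x ^ n) / y ^ n * b ^ n = ((x + y) ^ n - x ^ n) * c ^ n"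
    by (simp add: c_def power_divide)
  also have "\<dots> = (c * x + b) ^ n - (c * x) ^ n"
    using \<open>c * y = b\<close> by (simp add: algebra_simps flip: power_mult_distrib)
  also have "\<dots> \<le> (a + b) ^ n - a ^ n"
    using \<open>c \<ge> 0\<close> \<open>c * x \<le> a\<close> assms by (intro power_add_diff_mono) auto
  finally show ?thesis by simp
qed

lemma subadditive_of_order_le_power_root_sum:
  assumes "subadditive_of_order n I \<Phi>" "n \<ge> 1" "\<forall>t\<in>I. \<Phi> t \<ge> 0"
    and "x \<in> I" "y \<in> I" "x + y \<in> I" "0 < x" "0 < y"
  shows "\<Phi> (x + y) \<le> (root n (\<Phi> x) + root n (\<Phi> y)) ^ n"
proof -
  define a b where "a = root n (\<Phi> x)" and "b = root n (\<Phi> y)"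
  have "0 \<le> a" "0 \<le> b" "a ^ n = \<Phi> x" "b ^ n = \<Phi> y"
    using assms by (simp_all add: a_def b_def real_root_pow_pos2)
  have order_ineq: "\<Phi> (s + t) \<le> \<Phi> s + ((s + t) ^ n - s ^ n) / t ^ n * \<Phi> t"
    if "s \<in> I" "t \<in> I" "s + t \<in> I" "0 < t" for s t
    using assms(1) that unfolding subadditive_of_order_def by blast
  show ?thesis
  proof (cases "b * x \<le> a * y")
    case True
    then show ?thesis
      using order_ineq[of x y] power_add_ge_order_increment[of a b x y n]
        \<open>0 \<le> a\<close> \<open>0 \<le> b\<close> \<open>a ^ n = \<Phi> x\<close> \<open>b ^ n = \<Phi> y\<close> assms
      by (simp add: a_def b_def)
  next
    case False
    then show ?thesis
      using order_ineq[of y x] power_add_ge_order_increment[of b a y x n]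
        \<open>0 \<le> a\<close> \<open>0 \<le> b\<close> \<open>a ^ n = \<Phi> x\<close> \<open>b ^ n = \<Phi> y\<close> assms
      by (simp add: a_def b_def add.commute)
  qed
qed

theorem theorem2p3:
  fixes I :: "real set" and n :: nat and \<Phi> :: "real \<Rightarrow> real"
  assumes "is_interval I" and "I \<subseteq> {0..}" and "\<exists>a\<in>I. \<exists>b\<in>I. a \<noteq> b"
    and "n \<ge> 1"
    and "\<forall>x\<in>I. \<Phi> x \<ge> 0"
    and "subadditive_of_order n I \<Phi>"
  shows "subadditive_on I (\<lambda>x. root n (\<Phi> x))"
  unfolding subadditive_on_def
proof (intro ballI impI)
  fix x y assume "x \<in> I" "y \<in> I" "x + y \<in> I"
  have roots_nonneg: "0 \<le> root n (\<Phi> x)" "0 \<le> root n (\<Phi> y)"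
    using assms(5) \<open>x \<in> I\<close> \<open>y \<in> I\<close> by (auto intro!: real_root_ge_zero)
  show "root n (\<Phi> (x + y)) \<le> root n (\<Phi> x) + root n (\<Phi> y)"
  proof (cases "x = 0 \<or> y = 0")
    case True
    then show ?thesis using roots_nonneg by auto
  next
    case False
    with assms(2) \<open>x \<in> I\<close> \<open>y \<in> I\<close> have "0 < x" "0 < y" by force+
    then have "\<Phi> (x + y) \<le> (root n (\<Phi> x) + root n (\<Phi> y)) ^ n"
      using subadditive_of_order_le_power_root_sum assms \<open>x \<in> I\<close> \<open>y \<in> I\<close> \<open>x + y \<in> I\<close>
      by blast
    then have "root n (\<Phi> (x + y)) \<le> root n ((root n (\<Phi> x) + root n (\<Phi> y)) ^ n)"
      using assms(4) by simp
    also have "\<dots> = root n (\<Phi> x) + root n (\<Phi> y)"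
      using roots_nonneg assms(4) by (simp add: real_root_power_cancel)
    finally show ?thesis .
  qed
qed

end
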